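(* Let $B$ be a standard Brownian motion, let $\zeta$ be any subordinator independent of $B$, and let $X$ be the process associated with $B$ and $\zeta$ (defined in the context, with $\kappa=\tfrac12$; no martingale condition imposed on $\zeta$). Then $(\exp(X_t-t/2))_{t\ge0}$ has the same one-dimensional marginal distributions as $(\exp(B_t-t/2))_{t\ge0}$, but it is not a martingale unless $\zeta_t=t$ for all $t$, in which case $X$ has the same law as $B$.
   Context: A subordinator is a process started at $0$ with nonnegative, independent and stationary increments. The process $X$ associated with $B$ and $\zeta$ is the process $(X_t)_{t\ge0}$, $X_0=0$, such that for every $a\in\mathbb{R}$, $(X_t)_{t\ge e^{-a}}$ has the same finite-dimensional distributions as $(t^{1/2}e^{-\zeta_{a+\ln t}/2}B_{e^{\zeta_{a+\ln t}}})_{t\ge e^{-a}}$; equivalently $X$ is the Markov process with $X_0=0$ and transition function $\widetilde P(s,t,x,\mathrm{d}y)=\mathbb{E}[P(Rt,t,(t/s)^{1/2}R^{1/2}x,\mathrm{d}y)]$, $0<s\le t$, where $R=e^{-\zeta_{\ln(t/s)}}$ and $P$ is the Brownian transition function. *)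

theory Defs
  imports "HOL-Probability.Probability"
begin

text \<open>Real-valued processes indexed by time t \<ge> 0 are modelled as functions
  real \<Rightarrow> 'w \<Rightarrow> real; only the values at t \<ge> 0 matter.\<close>

definition same_fdd_on :: "real set \<Rightarrow> 'a measure \<Rightarrow> (real \<Rightarrow> 'a \<Rightarrow> real)
    \<Rightarrow> 'b measure \<Rightarrow> (real \<Rightarrow> 'b \<Rightarrow> real) \<Rightarrow> bool" where
  "same_fdd_on T N X M Y \<longleftrightarrow>
     (\<forall>I. finite I \<and> I \<subseteq> T \<longrightarrow>
        distr N (Pi\<^sub>M I (\<lambda>_. borel)) (\<lambda>\<omega>. restrict (\<lambda>t. X t \<omega>) I)
      = distr M (Pi\<^sub>M I (\<lambda>_. borel)) (\<lambda>\<omega>. restrict (\<lambda>t. Y t \<omega>) I))"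

definition indep_increments :: "'a measure \<Rightarrow> (real \<Rightarrow> 'a \<Rightarrow> real) \<Rightarrow> bool" where
  "indep_increments M Z \<longleftrightarrow>
     (\<forall>ts::real list. sorted_wrt (<) ts \<and> (\<forall>t\<in>set ts. 0 \<le> t) \<longrightarrow>
        prob_space.indep_vars M (\<lambda>_. borel)
          (\<lambda>i \<omega>. Z (ts ! Suc i) \<omega> - Z (ts ! i) \<omega>) {..<length ts - 1})"

definition standard_BM :: "'a measure \<Rightarrow> (real \<Rightarrow> 'a \<Rightarrow> real) \<Rightarrow> bool" where
  "standard_BM M B \<longleftrightarrow> prob_space M \<and>
     (\<forall>t\<ge>0. B t \<in> borel_measurable M) \<and>
     (\<forall>\<omega>\<in>space M. B 0 \<omega> = 0) \<and>
     (\<forall>\<omega>\<in>space M. continuous_on {0..} (\<lambda>t. B t \<omega>)) \<and>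
     (\<forall>s t. 0 \<le> s \<and> s < t \<longrightarrow>
        distributed M lborel (\<lambda>\<omega>. B t \<omega> - B s \<omega>) (normal_density 0 (sqrt (t - s)))) \<and>
     indep_increments M B"

definition subordinator :: "'a measure \<Rightarrow> (real \<Rightarrow> 'a \<Rightarrow> real) \<Rightarrow> bool" where
  "subordinator M Z \<longleftrightarrow> prob_space M \<and>
     (\<forall>t\<ge>0. Z t \<in> borel_measurable M) \<and>
     (\<forall>\<omega>\<in>space M. Z 0 \<omega> = 0) \<and>
     (\<forall>s t. 0 \<le> s \<and> s \<le> t \<longrightarrow> (\<forall>\<omega>\<in>space M. Z s \<omega> \<le> Z t \<omega>)) \<and>
     indep_increments M Z \<and>
     (\<forall>s h. 0 \<le> s \<and> 0 \<le> h \<longrightarrow>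
        distr M borel (\<lambda>\<omega>. Z (s + h) \<omega> - Z s \<omega>) = distr M borel (Z h))"

definition indep_processes :: "'a measure \<Rightarrow> (real \<Rightarrow> 'a \<Rightarrow> real) \<Rightarrow> (real \<Rightarrow> 'a \<Rightarrow> real) \<Rightarrow> bool" where
  "indep_processes M B Z \<longleftrightarrow>
     prob_space.indep_var M
       (Pi\<^sub>M {0..} (\<lambda>_. borel)) (\<lambda>\<omega>. restrict (\<lambda>t. B t \<omega>) {0..})
       (Pi\<^sub>M {0..} (\<lambda>_. borel)) (\<lambda>\<omega>. restrict (\<lambda>t. Z t \<omega>) {0..})"

definition associated_process ::
  "'b measure \<Rightarrow> (real \<Rightarrow> 'b \<Rightarrow> real) \<Rightarrow> 'a measure \<Rightarrow> (real \<Rightarrow> 'a \<Rightarrow> real) \<Rightarrow> (real \<Rightarrow> 'a \<Rightarrow> real) \<Rightarrow> bool" where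
  "associated_process N X M B \<zeta> \<longleftrightarrow> prob_space N \<and>
     (\<forall>t\<ge>0. X t \<in> borel_measurable N) \<and>
     (AE \<omega> in N. X 0 \<omega> = 0) \<and>
     (\<forall>a::real. same_fdd_on {exp (- a)..} N X M
        (\<lambda>t \<omega>. sqrt t * exp (- \<zeta> (a + ln t) \<omega> / 2) * B (exp (\<zeta> (a + ln t) \<omega>)) \<omega>))"

text \<open>Natural filtration of Y at time s, and the martingale property w.r.t. it
  (E[Y_t | F_s] = Y_s written out via the defining property of conditional expectation).\<close>
definition natural_filtration :: "'a measure \<Rightarrow> (real \<Rightarrow> 'a \<Rightarrow> real) \<Rightarrow> real \<Rightarrow> 'a measure" where
  "natural_filtration N Y s =
     sigma (space N) {Y u -` A \<inter> space N | u A. 0 \<le> u \<and> u \<le> s \<and> A \<in> sets borel}"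

definition martingale :: "'a measure \<Rightarrow> (real \<Rightarrow> 'a \<Rightarrow> real) \<Rightarrow> bool" where
  "martingale N Y \<longleftrightarrow>
     (\<forall>t\<ge>0. Y t \<in> borel_measurable N \<and> integrable N (Y t)) \<and>
     (\<forall>s t. 0 \<le> s \<and> s \<le> t \<longrightarrow>
        (\<forall>A\<in>sets (natural_filtration N Y s).
           (\<integral>\<omega>. indicator A \<omega> * Y t \<omega> \<partial>N) = (\<integral>\<omega>. indicator A \<omega> * Y s \<omega> \<partial>N)))"

end

theory Submission
  imports Defs
begin

text \<open>
  For \<open>t \<ge> exp (- a)\<close> the process \<open>X\<close> is represented by
  \<open>\<surd>t exp (- \<zeta>(a + ln t) / 2) B(exp \<zeta>(a + ln t))\<close>. With \<open>a = - ln t\<close> only \<open>\<zeta>(0) = 0\<close>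
  enters, so \<open>X\<^sub>t\<close> has the law of \<open>\<surd>t B\<^sub>1\<close>, which by Brownian scaling is the law of \<open>B\<^sub>t\<close>.

  If \<open>Y\<^sub>t = exp (X\<^sub>t - t / 2)\<close> is a martingale, then \<open>E[Y\<^sub>1\<^sup>k Y\<^sub>t] = E[Y\<^sub>1\<^sup>k Y\<^sub>1]\<close>. For \<open>t = exp u\<close>
  the representation with \<open>a = 0\<close> expresses the left-hand side through \<open>B\<close> and the independent
  \<open>\<zeta>\<close>; integrating out \<open>B\<close> with its Gaussian exponential moments leaves
  \<open>E exp (k W) = exp k\<close> for \<open>W = exp ((u - \<zeta>\<^sub>u) / 2)\<close>. For \<open>k = 1, 2\<close> this says that \<open>exp W\<close>
  has mean \<open>e\<close> and variance \<open>0\<close>, so \<open>W = 1\<close>, i.e. \<open>\<zeta>\<^sub>u = u\<close>, almost surely.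

  Conversely, if \<open>\<zeta>\<^sub>t = t\<close>, then on a finite set of times \<open>\<ge> m\<close> the representation with
  \<open>a = - ln m\<close> is \<open>\<surd>m B(t / m)\<close>, which by Brownian scaling has the finite-dimensional
  distributions of \<open>B\<close>. Scaling only involves the independent Gaussian increments of \<open>B\<close>;
  path continuity is needed only to make \<open>B\<close> at a random time measurable.
\<close>

section \<open>Processes with independent Gaussian increments\<close>

lemma normal_density_mult_exp:
  assumes "0 < \<sigma>"
  shows "normal_density 0 \<sigma> x * exp (l * x) = exp (l\<^sup>2 * \<sigma>\<^sup>2 / 2) * normal_density (l * \<sigma>\<^sup>2) \<sigma> x"
proof -
  have "- x\<^sup>2 / (2 * \<sigma>\<^sup>2) + l * x = l\<^sup>2 * \<sigma>\<^sup>2 / 2 - (x - l * \<sigma>\<^sup>2)\<^sup>2 / (2 * \<sigma>\<^sup>2)"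
    using assms by (simp add: field_simps power2_eq_square)
  then show ?thesis
    unfolding normal_density_def by (simp add: exp_add[symmetric] exp_diff[symmetric] mult_ac)
qed

lemma nn_integral_exp_normal:
  assumes X: "distributed M lborel X (normal_density 0 \<sigma>)" and "0 < \<sigma>"
  shows "(\<integral>\<^sup>+\<omega>. exp (l * X \<omega>) \<partial>M) = exp (l\<^sup>2 * \<sigma>\<^sup>2 / 2)"
proof -
  have "(\<integral>\<^sup>+\<omega>. exp (l * X \<omega>) \<partial>M) = (\<integral>\<^sup>+x. normal_density 0 \<sigma> x * exp (l * x) \<partial>lborel)"
    using distributed_nn_integral[OF X, of "\<lambda>x. exp (l * x)"] by (simp add: ennreal_mult')
  also have "\<dots> = (\<integral>\<^sup>+x. exp (l\<^sup>2 * \<sigma>\<^sup>2 / 2) * ennreal (normal_density (l * \<sigma>\<^sup>2) \<sigma> x) \<partial>lborel)"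
    using \<open>0 < \<sigma>\<close> by (simp add: normal_density_mult_exp ennreal_mult')
  also have "\<dots> = exp (l\<^sup>2 * \<sigma>\<^sup>2 / 2)"
    using \<open>0 < \<sigma>\<close> by (simp add: nn_integral_cmult nn_integral_eq_integral)
  finally show ?thesis .
qed

definition gaussian_increments :: "'a measure \<Rightarrow> (real \<Rightarrow> 'a \<Rightarrow> real) \<Rightarrow> bool" where
  "gaussian_increments M U \<longleftrightarrow> prob_space M \<and>
     (\<forall>t\<ge>0. U t \<in> borel_measurable M) \<and>
     (\<forall>\<omega>\<in>space M. U 0 \<omega> = 0) \<and>
     (\<forall>s t. 0 \<le> s \<and> s < t \<longrightarrow>
        distributed M lborel (\<lambda>\<omega>. U t \<omega> - U s \<omega>) (normal_density 0 (sqrt (t - s)))) \<and>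
     indep_increments M U"

lemma
  assumes "gaussian_increments M U"
  shows gaussian_increments_prob_space: "prob_space M"
    and gaussian_increments_measurable: "0 \<le> t \<Longrightarrow> U t \<in> borel_measurable M"
    and gaussian_increments_zero: "\<omega> \<in> space M \<Longrightarrow> U 0 \<omega> = 0"
    and gaussian_increments_distributed: "0 \<le> s \<Longrightarrow> s < t \<Longrightarrow>
      distributed M lborel (\<lambda>\<omega>. U t \<omega> - U s \<omega>) (normal_density 0 (sqrt (t - s)))"
    and gaussian_increments_indep: "indep_increments M U"
  using assms unfolding gaussian_increments_def by blast+

lemma
  assumes "standard_BM M B"
  shows standard_BM_gaussian_increments: "gaussian_increments M B"
    and standard_BM_continuous: "\<omega> \<in> space M \<Longrightarrow> continuous_on {0..} (\<lambda>t. B t \<omega>)"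
  using assms unfolding standard_BM_def gaussian_increments_def by blast+

lemma gaussian_increments_distributed_at:
  assumes U: "gaussian_increments M U" and "0 < t"
  shows "distributed M lborel (U t) (normal_density 0 (sqrt t))"
proof -
  have "distributed M lborel (\<lambda>\<omega>. U t \<omega> - U 0 \<omega>) (normal_density 0 (sqrt (t - 0)))"
    using gaussian_increments_distributed[OF U, of 0 t] \<open>0 < t\<close> by simp
  moreover have "distr M lborel (\<lambda>\<omega>. U t \<omega> - U 0 \<omega>) = distr M lborel (U t)"
    "(\<lambda>\<omega>. U t \<omega> - U 0 \<omega>) \<in> borel_measurable M \<longleftrightarrow> U t \<in> borel_measurable M"
    using gaussian_increments_zero[OF U] by (auto intro!: distr_cong measurable_cong)
  ultimately show ?thesis
    unfolding distributed_def by simp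
qed

lemma nn_integral_exp_gaussian_increment:
  assumes "gaussian_increments M U" "0 \<le> s" "s < t"
  shows "(\<integral>\<^sup>+\<omega>. exp (l * (U t \<omega> - U s \<omega>)) \<partial>M) = exp (l\<^sup>2 * (t - s) / 2)"
  using nn_integral_exp_normal[OF gaussian_increments_distributed[OF assms], of l] assms(3) by simp

lemma nn_integral_exp_gaussian_increments_at:
  assumes "gaussian_increments M U" "0 < t"
  shows "(\<integral>\<^sup>+\<omega>. exp (l * U t \<omega>) \<partial>M) = exp (l\<^sup>2 * t / 2)"
  using nn_integral_exp_normal[OF gaussian_increments_distributed_at[OF assms], of l] assms(2) by simp

lemma nn_integral_exp_gaussian_increments_two_times:
  assumes U: "gaussian_increments M U" and "0 < s" "s \<le> t"
  shows "(\<integral>\<^sup>+\<omega>. exp (\<alpha> * U s \<omega> + \<beta> * U t \<omega>) \<partial>M)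
       = exp ((\<alpha> + \<beta>)\<^sup>2 * s / 2 + \<beta>\<^sup>2 * (t - s) / 2)"
proof (cases "s = t")
  case True
  then show ?thesis
    using nn_integral_exp_gaussian_increments_at[OF U \<open>0 < s\<close>, of "\<alpha> + \<beta>"] by (simp add: distrib_right)
next
  case False
  interpret prob_space M
    using gaussian_increments_prob_space[OF U] .
  define ts where "ts = [0, s, t]"
  define l where "l i = (if i = (0::nat) then \<alpha> + \<beta> else \<beta>)" for i
  define D where "D i \<omega> = U (ts ! Suc i) \<omega> - U (ts ! i) \<omega>" for i \<omega>
  have "sorted_wrt (<) ts" "\<forall>x\<in>set ts. 0 \<le> x"
    using \<open>0 < s\<close> \<open>s \<le> t\<close> False by (auto simp: ts_def)
  then have "indep_vars (\<lambda>_. borel) D {..<length ts - 1}"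
    using gaussian_increments_indep[OF U] unfolding indep_increments_def D_def by blast
  then have indep: "indep_vars (\<lambda>_. borel) (\<lambda>i \<omega>. ennreal (exp (l i * D i \<omega>))) {0, 1}"
    by (rule indep_vars_compose2[OF indep_vars_subset]) (auto simp: ts_def)
  have "(\<integral>\<^sup>+\<omega>. exp (\<alpha> * U s \<omega> + \<beta> * U t \<omega>) \<partial>M)
      = (\<integral>\<^sup>+\<omega>. (\<Prod>i\<in>{0, 1}. ennreal (exp (l i * D i \<omega>))) \<partial>M)"
  proof (rule nn_integral_cong)
    fix \<omega> assume "\<omega> \<in> space M"
    then have "\<alpha> * U s \<omega> + \<beta> * U t \<omega> = l 0 * D 0 \<omega> + l 1 * D 1 \<omega>"
      using gaussian_increments_zero[OF U] by (simp add: D_def l_def ts_def algebra_simps)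
    then show "ennreal (exp (\<alpha> * U s \<omega> + \<beta> * U t \<omega>)) = (\<Prod>i\<in>{0, 1}. ennreal (exp (l i * D i \<omega>)))"
      by (simp add: exp_add ennreal_mult')
  qed
  also have "\<dots> = (\<Prod>i\<in>{0, 1}. \<integral>\<^sup>+\<omega>. exp (l i * D i \<omega>) \<partial>M)"
    by (rule indep_vars_nn_integral[OF _ indep]) simp_all
  also have "\<dots> = (\<integral>\<^sup>+\<omega>. exp ((\<alpha> + \<beta>) * (U s \<omega> - U 0 \<omega>)) \<partial>M)
                 * (\<integral>\<^sup>+\<omega>. exp (\<beta> * (U t \<omega> - U s \<omega>)) \<partial>M)"
    by (simp add: D_def l_def ts_def)
  also have "\<dots> = exp ((\<alpha> + \<beta>)\<^sup>2 * s / 2) * exp (\<beta>\<^sup>2 * (t - s) / 2)"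
    using \<open>0 < s\<close> \<open>s \<le> t\<close> False
    by (simp add: nn_integral_exp_gaussian_increment[OF U] ennreal_mult')
  finally show ?thesis
    by (simp add: exp_add ennreal_mult' del: exp_gt_zero)
qed

lemma sorted_wrt_less_nth_le_iff:
  fixes xs :: "'a::linorder list"
  assumes "sorted_wrt (<) xs" "i < length xs" "j < length xs"
  shows "xs ! i \<le> xs ! j \<longleftrightarrow> i \<le> j"
  using sorted_wrt_nth_less[OF assms(1), of i j] sorted_wrt_nth_less[OF assms(1), of j i] assms(2,3)
  by (cases i j rule: linorder_cases) auto

definition values_of_increments :: "real list \<Rightarrow> (nat \<Rightarrow> real) \<Rightarrow> real \<Rightarrow> real" where
  "values_of_increments ts d = restrict (\<lambda>r. \<Sum>i | i < length ts \<and> ts ! i \<le> r. d i) (set ts)"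

lemma measurable_values_of_increments:
  "values_of_increments ts \<in> measurable (Pi\<^sub>M {..<length ts} (\<lambda>_. borel)) (Pi\<^sub>M (set ts) (\<lambda>_. borel))"
  unfolding values_of_increments_def
  by (intro measurable_restrict borel_measurable_sum measurable_component_singleton) auto

lemma values_of_increments_telescope:
  assumes ts: "sorted_wrt (<) ts" and "f 0 = 0"
  shows "values_of_increments ts (\<lambda>i\<in>{..<length ts}. f ((0 # ts) ! Suc i) - f ((0 # ts) ! i))
       = restrict f (set ts)"
proof (rule ext)
  fix r
  show "values_of_increments ts (\<lambda>i\<in>{..<length ts}. f ((0 # ts) ! Suc i) - f ((0 # ts) ! i)) r
      = restrict f (set ts) r"
  proof (cases "r \<in> set ts")
    case True
    then obtain j where j: "j < length ts" "r = ts ! j"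
      by (auto simp: in_set_conv_nth)
    then have "{i. i < length ts \<and> ts ! i \<le> r} = {..<Suc j}"
      using sorted_wrt_less_nth_le_iff[OF ts] by auto
    then have "values_of_increments ts (\<lambda>i\<in>{..<length ts}. f ((0 # ts) ! Suc i) - f ((0 # ts) ! i)) r
        = (\<Sum>i<Suc j. f ((0 # ts) ! Suc i) - f ((0 # ts) ! i))"
      using True j(1) by (simp add: values_of_increments_def)
    also have "\<dots> = f r"
      using sum_lessThan_telescope[of "\<lambda>i. f ((0 # ts) ! i)" "Suc j"] \<open>f 0 = 0\<close> j by simp
    finally show ?thesis
      using True by simp
  qed (simp add: values_of_increments_def)
qed

lemma sorted_wrt_Cons_zero_nth:
  fixes ts :: "real list"
  assumes ts: "sorted_wrt (<) ts" "\<forall>t\<in>set ts. 0 < t" and "i < length ts"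
  shows "0 \<le> (0 # ts) ! i" "(0 # ts) ! i < (0 # ts) ! Suc i"
proof -
  have pos: "0 < ts ! j" if "j < length ts" for j
    using ts(2) that by simp
  show "0 \<le> (0 # ts) ! i"
    using pos \<open>i < length ts\<close> by (cases i) (auto intro: less_imp_le)
  show "(0 # ts) ! i < (0 # ts) ! Suc i"
    using pos \<open>i < length ts\<close> sorted_wrt_nth_less[OF ts(1)] by (cases i) auto
qed

definition gaussian_increments_law :: "real list \<Rightarrow> (nat \<Rightarrow> real) measure" where
  "gaussian_increments_law ts =
     Pi\<^sub>M {..<length ts} (\<lambda>i. density lborel (normal_density 0 (sqrt ((0 # ts) ! Suc i - (0 # ts) ! i))))"

lemma gaussian_increments_distr_increments:
  assumes U: "gaussian_increments M U"
    and ts: "sorted_wrt (<) ts" "\<forall>t\<in>set ts. 0 < t" "ts \<noteq> []"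
  shows "distr M (Pi\<^sub>M {..<length ts} (\<lambda>_. borel))
           (\<lambda>\<omega>. \<lambda>i\<in>{..<length ts}. U ((0 # ts) ! Suc i) \<omega> - U ((0 # ts) ! i) \<omega>)
       = gaussian_increments_law ts"
proof -
  interpret prob_space M
    using gaussian_increments_prob_space[OF U] .
  define D where "D i \<omega> = U ((0 # ts) ! Suc i) \<omega> - U ((0 # ts) ! i) \<omega>" for i \<omega>
  note times = sorted_wrt_Cons_zero_nth[OF ts(1,2)]
  have "sorted_wrt (<) (0 # ts)" "\<forall>t\<in>set (0 # ts). 0 \<le> t"
    using ts(1,2) by (auto simp: le_less)
  then have "indep_vars (\<lambda>_. borel) D {..<length (0 # ts) - 1}"
    using gaussian_increments_indep[OF U] unfolding indep_increments_def D_def by blast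
  then have "indep_vars (\<lambda>_. borel) D {..<length ts}"
    by simp
  moreover have "random_variable borel (D i)" if "i \<in> {..<length ts}" for i
    using times[of i] that unfolding D_def
    by (intro borel_measurable_diff gaussian_increments_measurable[OF U]) auto
  moreover have "{..<length ts} \<noteq> {}"
    using ts(3) by (cases ts) auto
  ultimately have "distr M (Pi\<^sub>M {..<length ts} (\<lambda>_. borel)) (\<lambda>\<omega>. \<lambda>i\<in>{..<length ts}. D i \<omega>)
      = Pi\<^sub>M {..<length ts} (\<lambda>i. distr M borel (D i))"
    by (simp add: indep_vars_iff_distr_eq_PiM')
  also have "\<dots> = gaussian_increments_law ts"
    unfolding gaussian_increments_law_def
  proof (rule PiM_cong)
    fix i assume "i \<in> {..<length ts}"
    then have "i < length ts"
      by simp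
    then have "distributed M lborel (D i) (normal_density 0 (sqrt ((0 # ts) ! Suc i - (0 # ts) ! i)))"
      unfolding D_def by (intro gaussian_increments_distributed[OF U times])
    then have "distr M lborel (D i)
        = density lborel (normal_density 0 (sqrt ((0 # ts) ! Suc i - (0 # ts) ! i)))"
      by (rule distributed_distr_eq_density)
    moreover have "distr M borel (D i) = distr M lborel (D i)"
      by (rule distr_cong) simp_all
    ultimately show "distr M borel (D i)
        = density lborel (normal_density 0 (sqrt ((0 # ts) ! Suc i - (0 # ts) ! i)))"
      by simp
  qed simp
  finally show ?thesis
    by (simp add: D_def)
qed

lemma gaussian_increments_distr_values:
  assumes U: "gaussian_increments M U"
    and ts: "sorted_wrt (<) ts" "\<forall>t\<in>set ts. 0 < t" "ts \<noteq> []"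
  shows "distr M (Pi\<^sub>M (set ts) (\<lambda>_. borel)) (\<lambda>\<omega>. restrict (\<lambda>r. U r \<omega>) (set ts))
       = distr (gaussian_increments_law ts) (Pi\<^sub>M (set ts) (\<lambda>_. borel)) (values_of_increments ts)"
proof -
  define inc where "inc \<omega> = (\<lambda>i\<in>{..<length ts}. U ((0 # ts) ! Suc i) \<omega> - U ((0 # ts) ! i) \<omega>)" for \<omega>
  have "0 \<le> (0 # ts) ! i" "0 \<le> (0 # ts) ! Suc i" if "i < length ts" for i
    using sorted_wrt_Cons_zero_nth[OF ts(1,2) that] by linarith+
  then have inc: "inc \<in> measurable M (Pi\<^sub>M {..<length ts} (\<lambda>_. borel))"
    unfolding inc_def
    by (intro measurable_restrict borel_measurable_diff gaussian_increments_measurable[OF U]) auto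
  have "distr M (Pi\<^sub>M (set ts) (\<lambda>_. borel)) (\<lambda>\<omega>. restrict (\<lambda>r. U r \<omega>) (set ts))
      = distr M (Pi\<^sub>M (set ts) (\<lambda>_. borel)) (values_of_increments ts \<circ> inc)"
    using values_of_increments_telescope[OF ts(1), of "\<lambda>r. U r _"] gaussian_increments_zero[OF U]
    by (intro distr_cong) (simp_all add: inc_def)
  also have "\<dots> = distr (distr M (Pi\<^sub>M {..<length ts} (\<lambda>_. borel)) inc) (Pi\<^sub>M (set ts) (\<lambda>_. borel))
      (values_of_increments ts)"
    by (rule distr_distr[OF measurable_values_of_increments inc, symmetric])
  also have "distr M (Pi\<^sub>M {..<length ts} (\<lambda>_. borel)) inc = gaussian_increments_law ts"
    unfolding inc_def[abs_def] by (rule gaussian_increments_distr_increments[OF U ts])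
  finally show ?thesis .
qed

lemma distr_restrict_empty:
  assumes "prob_space M"
  shows "distr M (Pi\<^sub>M {} K) (\<lambda>\<omega>. restrict (f \<omega>) {}) = return (Pi\<^sub>M {} K) (\<lambda>_. undefined)"
  using prob_space.distr_const[OF assms, of "\<lambda>_. undefined" "Pi\<^sub>M {} K"] by (simp add: restrict_def)

lemma gaussian_increments_same_fdd:
  assumes U: "gaussian_increments M U" and V: "gaussian_increments M' V"
  shows "same_fdd_on {0<..} M U M' V"
  unfolding same_fdd_on_def
proof (intro allI impI)
  fix I :: "real set" assume I: "finite I \<and> I \<subseteq> {0<..}"
  show "distr M (Pi\<^sub>M I (\<lambda>_. borel)) (\<lambda>\<omega>. restrict (\<lambda>t. U t \<omega>) I)
      = distr M' (Pi\<^sub>M I (\<lambda>_. borel)) (\<lambda>\<omega>. restrict (\<lambda>t. V t \<omega>) I)"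
  proof (cases "I = {}")
    case True
    then show ?thesis
      using gaussian_increments_prob_space[OF U] gaussian_increments_prob_space[OF V]
      by (simp add: distr_restrict_empty)
  next
    case False
    define ts where "ts = sorted_list_of_set I"
    have ts: "sorted_wrt (<) ts" "set ts = I" "ts \<noteq> []" "\<forall>t\<in>set ts. 0 < t"
      using I False unfolding ts_def by auto
    show ?thesis
      using gaussian_increments_distr_values[OF U ts(1,4,3)] gaussian_increments_distr_values[OF V
        ts(1,4,3)]
      by (simp add: ts(2))
  qed
qed

lemma gaussian_increments_scale:
  assumes U: "gaussian_increments M U" and "0 < c"
  shows "gaussian_increments M (\<lambda>t \<omega>. sqrt c * U (t / c) \<omega>)"
proof -
  interpret prob_space M
    using gaussian_increments_prob_space[OF U] .
  have "distributed M lborel (\<lambda>\<omega>. sqrt c * U (t / c) \<omega> - sqrt c * U (s / c) \<omega>) (normal_density 0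
    (sqrt (t - s)))"
    if "0 \<le> s" "s < t" for s t
  proof -
    have "0 \<le> s / c" "s / c < t / c"
      using that \<open>0 < c\<close> by (simp_all add: divide_strict_right_mono)
    then have "distributed M lborel (\<lambda>\<omega>. 0 + sqrt c * (U (t / c) \<omega> - U (s / c) \<omega>))
        (normal_density (0 + sqrt c * 0) (\<bar>sqrt c\<bar> * sqrt (t / c - s / c)))"
      using \<open>0 < c\<close> by (intro normal_density_affine gaussian_increments_distributed[OF U]) simp_all
    moreover have "\<bar>sqrt c\<bar> * sqrt (t / c - s / c) = sqrt (t - s)"
      using \<open>0 < c\<close> by (simp add: real_sqrt_mult[symmetric] right_diff_distrib)
    ultimately show ?thesis
      by (simp add: right_diff_distrib)
  qed
  moreover have "indep_increments M (\<lambda>t \<omega>. sqrt c * U (t / c) \<omega>)"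
    unfolding indep_increments_def
  proof (intro allI impI)
    fix ts :: "real list" assume ts: "sorted_wrt (<) ts \<and> (\<forall>t\<in>set ts. 0 \<le> t)"
    define ts' where "ts' = map (\<lambda>t. t / c) ts"
    have "sorted_wrt (<) ts' \<and> (\<forall>t\<in>set ts'. 0 \<le> t)"
      using ts \<open>0 < c\<close> unfolding ts'_def
      by (auto simp: sorted_wrt_map divide_strict_right_mono elim!: sorted_wrt_mono_rel[rotated])
    then have "indep_vars (\<lambda>_. borel) (\<lambda>i \<omega>. U (ts' ! Suc i) \<omega> - U (ts' ! i) \<omega>) {..<length ts' - 1}"
      using gaussian_increments_indep[OF U] unfolding indep_increments_def by blast
    then have "indep_vars (\<lambda>_. borel) (\<lambda>i \<omega>. sqrt c * (U (ts' ! Suc i) \<omega> - U (ts' ! i) \<omega>))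
      {..<length ts' - 1}"
      by (rule indep_vars_compose2) simp
    then show "indep_vars (\<lambda>_. borel) (\<lambda>i \<omega>. sqrt c * U (ts ! Suc i / c) \<omega> - sqrt c * U (ts ! i / c) \<omega>)
        {..<length ts - 1}"
      by (rule indep_vars_cong[THEN iffD1, rotated -1]) (auto simp: ts'_def right_diff_distrib)
  qed
  ultimately show ?thesis
    unfolding gaussian_increments_def
    using gaussian_increments_measurable[OF U] gaussian_increments_zero[OF U] \<open>0 < c\<close>
    by (simp add: prob_space_axioms)
qed


section \<open>Continuous paths at random times, and independence\<close>

definition dyadic_ceiling :: "nat \<Rightarrow> real \<Rightarrow> real" where
  "dyadic_ceiling n x = of_int \<lceil>x * 2 ^ n\<rceil> / 2 ^ n"

lemma dyadic_ceiling_ge: "x \<le> dyadic_ceiling n x"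
  unfolding dyadic_ceiling_def by (simp add: field_simps)

lemma dyadic_ceiling_le: "dyadic_ceiling n x \<le> x + 1 / 2 ^ n"
proof -
  have "of_int \<lceil>x * 2 ^ n\<rceil> \<le> x * 2 ^ n + 1"
    by linarith
  then show ?thesis
    unfolding dyadic_ceiling_def by (simp add: field_simps)
qed

lemma LIMSEQ_dyadic_ceiling: "(\<lambda>n. dyadic_ceiling n x) \<longlonglongrightarrow> x"
proof (rule real_tendsto_sandwich[where f="\<lambda>_. x" and h="\<lambda>n. x + 1 / 2 ^ n"])
  have "(\<lambda>n. x + (1 / 2) ^ n) \<longlonglongrightarrow> x + 0"
    by (intro tendsto_add tendsto_const LIMSEQ_realpow_zero) auto
  then show "(\<lambda>n. x + 1 / 2 ^ n) \<longlonglongrightarrow> x"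
    by (simp add: power_one_over)
qed (simp_all add: dyadic_ceiling_ge dyadic_ceiling_le)

text \<open>Evaluation of a path at a variable time is not measurable for the product \<open>\<sigma>\<close>-algebra on
  all paths; approximating the time by dyadic numbers from above gives a measurable substitute
  that agrees with evaluation on paths continuous on \<open>{0..}\<close>.\<close>

definition path_eval :: "(real \<Rightarrow> real) \<Rightarrow> real \<Rightarrow> real" where
  "path_eval f t = lim (\<lambda>n. f (dyadic_ceiling n (max 0 t)))"

lemma path_eval_continuous:
  assumes "continuous_on {0..} f" "0 \<le> t"
  shows "path_eval f t = f t"
proof -
  have "0 \<le> dyadic_ceiling n t" for n
    using assms(2) dyadic_ceiling_ge[of t n] by linarith
  then have "(\<lambda>n. f (dyadic_ceiling n t)) \<longlonglongrightarrow> f t"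
    using assms by (intro continuous_on_tendsto_compose[OF assms(1) LIMSEQ_dyadic_ceiling]) auto
  then show ?thesis
    unfolding path_eval_def using assms(2) by (simp add: limI)
qed

lemma path_eval_restrict:
  assumes "continuous_on {0..} (\<lambda>t. B t \<omega>)" "0 \<le> t"
  shows "path_eval (restrict (\<lambda>t. B t \<omega>) {0..}) t = B t \<omega>"
proof -
  have "continuous_on {0..} (restrict (\<lambda>t. B t \<omega>) {0..})"
    by (rule continuous_on_cong[THEN iffD2, OF refl _ assms(1)]) simp
  then show ?thesis
    using assms(2) by (simp add: path_eval_continuous)
qed

lemma measurable_path_eval[measurable]:
  "case_prod path_eval \<in> borel_measurable (Pi\<^sub>M {0..} (\<lambda>_. borel) \<Otimes>\<^sub>M borel)"
proof -
  let ?P = "Pi\<^sub>M {0::real..} (\<lambda>_. borel :: real measure) \<Otimes>\<^sub>M (borel :: real measure)"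
  \<comment> \<open>at level \<open>n\<close>, the evaluation time takes only countably many values\<close>
  have "(\<lambda>p. fst p (max 0 (of_int \<lceil>max 0 (snd p) * 2 ^ n\<rceil> / 2 ^ n))) \<in> borel_measurable ?P" for n
    by (rule measurable_compose_countable'[where I=UNIV]) auto
  moreover have "max 0 (of_int \<lceil>max 0 x * 2 ^ n\<rceil> / 2 ^ n) = dyadic_ceiling n (max 0 x)" for x ::
    real and n
    using dyadic_ceiling_ge[of "max 0 x" n] unfolding dyadic_ceiling_def by linarith
  ultimately show ?thesis
    unfolding path_eval_def case_prod_beta' by (intro borel_measurable_lim_metric) simp
qed

lemma measurable_at_random_time:
  fixes B :: "real \<Rightarrow> 'a \<Rightarrow> real" and T :: "'a \<Rightarrow> real"
  assumes B: "\<And>t. 0 \<le> t \<Longrightarrow> B t \<in> borel_measurable M"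
    and cont: "\<And>\<omega>. \<omega> \<in> space M \<Longrightarrow> continuous_on {0..} (\<lambda>t. B t \<omega>)"
    and T: "T \<in> borel_measurable M" "\<And>\<omega>. \<omega> \<in> space M \<Longrightarrow> 0 \<le> T \<omega>"
  shows "(\<lambda>\<omega>. B (T \<omega>) \<omega>) \<in> borel_measurable M"
proof -
  have "(\<lambda>\<omega>. restrict (\<lambda>t. B t \<omega>) {0..}) \<in> measurable M (Pi\<^sub>M {0..} (\<lambda>_. borel))"
    using B by (intro measurable_restrict) auto
  then have "(\<lambda>\<omega>. path_eval (restrict (\<lambda>t. B t \<omega>) {0..}) (T \<omega>)) \<in> borel_measurable M"
    using T(1) by measurable
  then show ?thesis
    using cont T(2) by (simp add: path_eval_restrict cong: measurable_cong)
qed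

lemma (in prob_space) nn_integral_indep_var:
  assumes indep: "indep_var S X T Y" and G: "G \<in> borel_measurable (S \<Otimes>\<^sub>M T)"
  shows "(\<integral>\<^sup>+\<omega>. G (X \<omega>, Y \<omega>) \<partial>M) = (\<integral>\<^sup>+\<omega>'. (\<integral>\<^sup>+\<omega>. G (X \<omega>, Y \<omega>') \<partial>M) \<partial>M)"
proof -
  have X[measurable]: "X \<in> measurable M S" and Y[measurable]: "Y \<in> measurable M T"
    using indep by (auto dest: indep_var_rv1 indep_var_rv2)
  interpret SX: prob_space "distr M S X"
    by (rule prob_space_distr[OF X])
  interpret TY: prob_space "distr M T Y"
    by (rule prob_space_distr[OF Y])
  interpret XY: pair_prob_space "distr M S X" "distr M T Y" ..
  have "(\<integral>\<^sup>+\<omega>. G (X \<omega>, Y \<omega>) \<partial>M) = (\<integral>\<^sup>+p. G p \<partial>distr M (S \<Otimes>\<^sub>M T) (\<lambda>\<omega>. (X \<omega>, Y \<omega>)))"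
    using G by (simp add: nn_integral_distr)
  also have "\<dots> = (\<integral>\<^sup>+p. G p \<partial>distr M S X \<Otimes>\<^sub>M distr M T Y)"
    using indep unfolding indep_var_distribution_eq by simp
  also have "\<dots> = (\<integral>\<^sup>+y. (\<integral>\<^sup>+x. G (x, y) \<partial>distr M S X) \<partial>distr M T Y)"
    by (rule XY.nn_integral_snd[symmetric])
      (subst measurable_cong_sets[OF sets_pair_measure_cong[OF sets_distr sets_distr] refl], fact G)
  also have "\<dots> = (\<integral>\<^sup>+y. (\<integral>\<^sup>+\<omega>. G (X \<omega>, y) \<partial>M) \<partial>distr M T Y)"
  proof (rule nn_integral_cong)
    fix y assume "y \<in> space (distr M T Y)"
    then have "(\<lambda>x. G (x, y)) \<in> borel_measurable S"
      using G by simp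
    then show "(\<integral>\<^sup>+x. G (x, y) \<partial>distr M S X) = (\<integral>\<^sup>+\<omega>. G (X \<omega>, y) \<partial>M)"
      by (simp add: nn_integral_distr)
  qed
  also have "\<dots> = (\<integral>\<^sup>+\<omega>'. (\<integral>\<^sup>+\<omega>. G (X \<omega>, Y \<omega>') \<partial>M) \<partial>M)"
    using G by (simp add: nn_integral_distr)
  finally show ?thesis .
qed


section \<open>Finite-dimensional distributions and martingales\<close>

lemma
  fixes f :: "'a \<Rightarrow> real" and g :: "'b \<Rightarrow> real"
  assumes "distr N borel f = distr M borel g" "f \<in> borel_measurable N" "g \<in> borel_measurable M"
  shows distr_eq_of_distr_eq: "h \<in> borel_measurable borel \<Longrightarrow> distr N borel (\<lambda>\<omega>. h (f \<omega>)) = distr M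
    borel (\<lambda>\<omega>. h (g \<omega>))"
    and nn_integral_eq_of_distr_eq: "H \<in> borel_measurable borel \<Longrightarrow> (\<integral>\<^sup>+\<omega>. H (f \<omega>) \<partial>N) = (\<integral>\<^sup>+\<omega>. H (g \<omega>) \<partial>M)"
proof -
  assume "h \<in> borel_measurable borel"
  then show "distr N borel (\<lambda>\<omega>. h (f \<omega>)) = distr M borel (\<lambda>\<omega>. h (g \<omega>))"
    using distr_distr[of h borel borel f N] distr_distr[of h borel borel g M] assms
      by (simp add: comp_def)
next
  assume "H \<in> borel_measurable borel"
  then show "(\<integral>\<^sup>+\<omega>. H (f \<omega>) \<partial>N) = (\<integral>\<^sup>+\<omega>. H (g \<omega>) \<partial>M)"
    using nn_integral_distr[of f N borel H] nn_integral_distr[of g M borel H] assms by simp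
qed

lemma same_fdd_onD:
  assumes "same_fdd_on T N X M Y" "finite I" "I \<subseteq> T"
  shows "distr N (Pi\<^sub>M I (\<lambda>_. borel)) (\<lambda>\<omega>. restrict (\<lambda>t. X t \<omega>) I)
       = distr M (Pi\<^sub>M I (\<lambda>_. borel)) (\<lambda>\<omega>. restrict (\<lambda>t. Y t \<omega>) I)"
  using assms unfolding same_fdd_on_def by blast

lemma same_fdd_on_distr:
  assumes "same_fdd_on T N X M Y" "t \<in> T"
    and "X t \<in> borel_measurable N" "Y t \<in> borel_measurable M"
  shows "distr N borel (X t) = distr M borel (Y t)"
proof -
  let ?P = "Pi\<^sub>M {t} (\<lambda>_. borel :: real measure)"
  let ?X = "\<lambda>\<omega>. restrict (\<lambda>r. X r \<omega>) {t}" and ?Y = "\<lambda>\<omega>. restrict (\<lambda>r. Y r \<omega>) {t}"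
  have X: "?X \<in> measurable N ?P" and Y: "?Y \<in> measurable M ?P"
    using assms(3,4) by (auto intro!: measurable_restrict)
  have ev: "(\<lambda>f. f t) \<in> borel_measurable ?P"
    by (rule measurable_component_singleton) simp
  have "distr N borel (X t) = distr (distr N ?P ?X) borel (\<lambda>f. f t)"
    by (simp add: distr_distr[OF ev X] comp_def)
  also have "\<dots> = distr (distr M ?P ?Y) borel (\<lambda>f. f t)"
    using same_fdd_onD[OF assms(1), of "{t}"] assms(2) by simp
  also have "\<dots> = distr M borel (Y t)"
    by (simp add: distr_distr[OF ev Y] comp_def)
  finally show ?thesis .
qed

lemma same_fdd_on_nn_integral_pair:
  fixes g :: "real \<times> real \<Rightarrow> ennreal"
  assumes "same_fdd_on T N X M Y" "s \<in> T" "t \<in> T"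
    and "X s \<in> borel_measurable N" "X t \<in> borel_measurable N"
    and "Y s \<in> borel_measurable M" "Y t \<in> borel_measurable M"
    and g: "g \<in> borel_measurable borel"
  shows "(\<integral>\<^sup>+\<omega>. g (X s \<omega>, X t \<omega>) \<partial>N) = (\<integral>\<^sup>+\<omega>. g (Y s \<omega>, Y t \<omega>) \<partial>M)"
proof -
  let ?P = "Pi\<^sub>M {s, t} (\<lambda>_. borel :: real measure)"
  have X: "(\<lambda>\<omega>. restrict (\<lambda>r. X r \<omega>) {s, t}) \<in> measurable N ?P"
    and Y: "(\<lambda>\<omega>. restrict (\<lambda>r. Y r \<omega>) {s, t}) \<in> measurable M ?P"
    using assms(4-7) by (auto intro!: measurable_restrict)
  have "(\<lambda>f. g (f s, f t)) \<in> borel_measurable ?P"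
    using g by measurable
  then have "(\<integral>\<^sup>+f. g (f s, f t) \<partial>distr N ?P (\<lambda>\<omega>. restrict (\<lambda>r. X r \<omega>) {s, t}))
      = (\<integral>\<^sup>+f. g (f s, f t) \<partial>distr M ?P (\<lambda>\<omega>. restrict (\<lambda>r. Y r \<omega>) {s, t}))"
    using same_fdd_onD[OF assms(1), of "{s, t}"] assms(2,3) by simp
  then show ?thesis
    using \<open>(\<lambda>f. g (f s, f t)) \<in> borel_measurable ?P\<close> by (simp add: nn_integral_distr X Y)
qed

lemma martingale_integrable:
  assumes "martingale N Y" "0 \<le> t"
  shows "Y t \<in> borel_measurable N" "integrable N (Y t)"
  using assms unfolding martingale_def by blast+

lemma martingale_nn_integral_indicator:
  assumes mart: "martingale N Y" and "0 \<le> s" "s \<le> t"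
    and nonneg: "\<And>r \<omega>. \<omega> \<in> space N \<Longrightarrow> 0 \<le> Y r \<omega>"
    and C: "C \<in> sets borel"
  shows "(\<integral>\<^sup>+\<omega>. ennreal (Y t \<omega>) * indicator (Y s -` C \<inter> space N) \<omega> \<partial>N)
       = (\<integral>\<^sup>+\<omega>. ennreal (Y s \<omega>) * indicator (Y s -` C \<inter> space N) \<omega> \<partial>N)"
proof -
  let ?A = "Y s -` C \<inter> space N"
  have "?A \<in> {Y u -` A \<inter> space N | u A. 0 \<le> u \<and> u \<le> s \<and> A \<in> sets borel}"
    using \<open>0 \<le> s\<close> C by blast
  then have "?A \<in> sets (natural_filtration N Y s)"
    unfolding natural_filtration_def by (subst sets_measure_of) auto
  then have "(\<integral>\<omega>. indicator ?A \<omega> * Y t \<omega> \<partial>N) = (\<integral>\<omega>. indicator ?A \<omega> * Y s \<omega> \<partial>N)"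
    using mart \<open>0 \<le> s\<close> \<open>s \<le> t\<close> unfolding martingale_def by blast
  moreover have "(\<integral>\<^sup>+\<omega>. ennreal (Y r \<omega>) * indicator ?A \<omega> \<partial>N) = (\<integral>\<omega>. indicator ?A \<omega> * Y r \<omega> \<partial>N)"
    if "0 \<le> r" for r
  proof -
    have "?A \<in> sets N"
      using martingale_integrable(1)[OF mart \<open>0 \<le> s\<close>] C by (rule measurable_sets)
    then have "integrable N (\<lambda>\<omega>. indicator ?A \<omega> * Y r \<omega>)"
      using integrable_mult_indicator[OF _ martingale_integrable(2)[OF mart \<open>0 \<le> r\<close>]] by simp
    moreover have "ennreal (Y r \<omega>) * indicator ?A \<omega> = ennreal (indicator ?A \<omega> * Y r \<omega>)" for \<omega>
      by (simp split: split_indicator)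
    ultimately show ?thesis
      using nonneg by (simp add: nn_integral_eq_integral)
  qed
  ultimately show ?thesis
    using \<open>0 \<le> s\<close> \<open>s \<le> t\<close> by simp
qed

lemma martingale_nn_integral_mult:
  fixes Y :: "real \<Rightarrow> 'b \<Rightarrow> real" and h :: "real \<Rightarrow> ennreal"
  assumes mart: "martingale N Y" and "0 \<le> s" "s \<le> t"
    and nonneg: "\<And>r \<omega>. \<omega> \<in> space N \<Longrightarrow> 0 \<le> Y r \<omega>"
    and h: "h \<in> borel_measurable borel"
  shows "(\<integral>\<^sup>+\<omega>. h (Y s \<omega>) * Y t \<omega> \<partial>N) = (\<integral>\<^sup>+\<omega>. h (Y s \<omega>) * Y s \<omega> \<partial>N)"
proof -
  have Y[measurable]: "Y r \<in> borel_measurable N" if "0 \<le> r" for r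
    using martingale_integrable(1)[OF mart that] .
  \<comment> \<open>the image of \<open>Y\<^sub>r \<cdot> N\<close> under \<open>Y\<^sub>s\<close>; the martingale property says it is the same for \<open>r = s, t\<close>\<close>
  define \<nu> where "\<nu> r = distr (density N (\<lambda>\<omega>. Y r \<omega>)) borel (Y s)" for r
  have \<nu>_eq: "\<nu> t = \<nu> s"
  proof (rule measure_eqI)
    fix C assume "C \<in> sets (\<nu> t)"
    then have C: "C \<in> sets borel"
      by (simp add: \<nu>_def)
    have "emeasure (\<nu> r) C = (\<integral>\<^sup>+\<omega>. ennreal (Y r \<omega>) * indicator (Y s -` C \<inter> space N) \<omega> \<partial>N)"
      if "0 \<le> r" for r
      unfolding \<nu>_def using C \<open>0 \<le> s\<close> that by (simp add: emeasure_distr emeasure_density)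
    then show "emeasure (\<nu> t) C = emeasure (\<nu> s) C"
      using martingale_nn_integral_indicator[OF mart \<open>0 \<le> s\<close> \<open>s \<le> t\<close> nonneg C] \<open>0 \<le> s\<close> \<open>s \<le> t\<close>
      by simp
  qed (simp add: \<nu>_def)
  have "(\<integral>\<^sup>+x. h x \<partial>\<nu> r) = (\<integral>\<^sup>+\<omega>. h (Y s \<omega>) * Y r \<omega> \<partial>N)" if "0 \<le> r" for r
  proof -
    have "(\<integral>\<^sup>+x. h x \<partial>\<nu> r) = (\<integral>\<^sup>+\<omega>. h (Y s \<omega>) \<partial>density N (\<lambda>\<omega>. Y r \<omega>))"
      unfolding \<nu>_def by (rule nn_integral_distr) (use \<open>0 \<le> s\<close> h in auto)
    also have "\<dots> = (\<integral>\<^sup>+\<omega>. h (Y s \<omega>) * Y r \<omega> \<partial>N)"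
      by (subst nn_integral_density) (use \<open>0 \<le> s\<close> that h in \<open>auto simp: mult.commute\<close>)
    finally show ?thesis .
  qed
  from this[of s] this[of t] show ?thesis
    using \<nu>_eq \<open>0 \<le> s\<close> \<open>s \<le> t\<close> by simp
qed

lemma (in prob_space) AE_eq_of_nn_integral_square:
  assumes V: "V \<in> borel_measurable M" "\<And>\<omega>. \<omega> \<in> space M \<Longrightarrow> 0 \<le> V \<omega>" and "0 \<le> c"
    and mean: "(\<integral>\<^sup>+\<omega>. ennreal (V \<omega>) \<partial>M) = ennreal c"
    and square: "(\<integral>\<^sup>+\<omega>. ennreal ((V \<omega>)\<^sup>2) \<partial>M) = ennreal (c\<^sup>2)"
  shows "AE \<omega> in M. V \<omega> = c"
proof -
  \<comment> \<open>\<open>(V - c)\<^sup>2 + 2 c V = V\<^sup>2 + c\<^sup>2\<close> integrates to \<open>E (V - c)\<^sup>2 + 2 c\<^sup>2 = 2 c\<^sup>2\<close>\<close>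
  have "(\<integral>\<^sup>+\<omega>. ennreal ((V \<omega> - c)\<^sup>2) \<partial>M) + (\<integral>\<^sup>+\<omega>. ennreal (2 * c * V \<omega>) \<partial>M)
      = (\<integral>\<^sup>+\<omega>. ennreal ((V \<omega> - c)\<^sup>2) + ennreal (2 * c * V \<omega>) \<partial>M)"
    using V by (intro nn_integral_add[symmetric]) auto
  also have "\<dots> = (\<integral>\<^sup>+\<omega>. ennreal ((V \<omega>)\<^sup>2) + ennreal (c\<^sup>2) \<partial>M)"
  proof (rule nn_integral_cong)
    fix \<omega> assume "\<omega> \<in> space M"
    then have "0 \<le> 2 * c * V \<omega>"
      using V(2) \<open>0 \<le> c\<close> by simp
    then have "ennreal ((V \<omega> - c)\<^sup>2) + ennreal (2 * c * V \<omega>) = ennreal ((V \<omega> - c)\<^sup>2 + 2 * c * V \<omega>)"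
      by (simp add: ennreal_plus)
    also have "(V \<omega> - c)\<^sup>2 + 2 * c * V \<omega> = (V \<omega>)\<^sup>2 + c\<^sup>2"
      by (simp add: power2_eq_square algebra_simps)
    finally show "ennreal ((V \<omega> - c)\<^sup>2) + ennreal (2 * c * V \<omega>) = ennreal ((V \<omega>)\<^sup>2) + ennreal (c\<^sup>2)"
      by (simp add: ennreal_plus)
  qed
  also have "\<dots> = ennreal (c\<^sup>2) + ennreal (c\<^sup>2)"
    using V by (simp add: nn_integral_add square emeasure_space_1)
  finally have sum: "(\<integral>\<^sup>+\<omega>. ennreal ((V \<omega> - c)\<^sup>2) \<partial>M) + (\<integral>\<^sup>+\<omega>. ennreal (2 * c * V \<omega>) \<partial>M)
      = ennreal (c\<^sup>2) + ennreal (c\<^sup>2)" .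
  have "(\<integral>\<^sup>+\<omega>. ennreal (2 * c * V \<omega>) \<partial>M) = ennreal (2 * c) * (\<integral>\<^sup>+\<omega>. ennreal (V \<omega>) \<partial>M)"
    using V \<open>0 \<le> c\<close>
      by (subst nn_integral_cmult[symmetric]) (auto intro!: nn_integral_cong simp: ennreal_mult')
  also have "\<dots> = ennreal (2 * c) * ennreal c"
    by (simp only: mean)
  also have "\<dots> = ennreal (c\<^sup>2) + ennreal (c\<^sup>2)"
    using \<open>0 \<le> c\<close>
      by (simp add: ennreal_mult'[symmetric] ennreal_plus[symmetric] power2_eq_square del: ennreal_plus)
  finally have "(\<integral>\<^sup>+\<omega>. ennreal ((V \<omega> - c)\<^sup>2) \<partial>M) = 0"
    using sum by (simp add: ennreal_plus[symmetric] del: ennreal_plus)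
  then have "AE \<omega> in M. ennreal ((V \<omega> - c)\<^sup>2) = 0"
    using V by (subst (asm) nn_integral_0_iff_AE) auto
  then show ?thesis
    by eventually_elim simp
qed


section \<open>The associated process\<close>

lemma
  assumes "subordinator M \<zeta>"
  shows subordinator_measurable: "0 \<le> t \<Longrightarrow> \<zeta> t \<in> borel_measurable M"
    and subordinator_zero: "\<omega> \<in> space M \<Longrightarrow> \<zeta> 0 \<omega> = 0"
    and subordinator_nonneg: "0 \<le> t \<Longrightarrow> \<omega> \<in> space M \<Longrightarrow> 0 \<le> \<zeta> t \<omega>"
proof -
  show zero: "\<omega> \<in> space M \<Longrightarrow> \<zeta> 0 \<omega> = 0" and "0 \<le> t \<Longrightarrow> \<zeta> t \<in> borel_measurable M"
    using assms unfolding subordinator_def by blast+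
  assume "0 \<le> t" "\<omega> \<in> space M"
  then have "\<zeta> 0 \<omega> \<le> \<zeta> t \<omega>"
    using assms unfolding subordinator_def by blast
  then show "0 \<le> \<zeta> t \<omega>"
    using zero[OF \<open>\<omega> \<in> space M\<close>] by simp
qed

definition time_changed_BM :: "(real \<Rightarrow> 'a \<Rightarrow> real) \<Rightarrow> (real \<Rightarrow> 'a \<Rightarrow> real) \<Rightarrow> real \<Rightarrow> real \<Rightarrow> 'a \<Rightarrow> real" where
  "time_changed_BM B \<zeta> a = (\<lambda>t \<omega>. sqrt t * exp (- \<zeta> (a + ln t) \<omega> / 2) * B (exp (\<zeta> (a + ln t) \<omega>)) \<omega>)"

lemma
  assumes "associated_process N X M B \<zeta>"
  shows associated_process_prob_space: "prob_space N"
    and associated_process_measurable: "0 \<le> t \<Longrightarrow> X t \<in> borel_measurable N"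
    and associated_process_zero: "AE \<omega> in N. X 0 \<omega> = 0"
    and associated_process_same_fdd: "same_fdd_on {exp (- a)..} N X M (time_changed_BM B \<zeta> a)"
  using assms unfolding associated_process_def time_changed_BM_def by blast+

lemma time_changed_BM_measurable:
  assumes BM: "standard_BM M B" and sub: "subordinator M \<zeta>" and "0 \<le> a + ln t"
  shows "time_changed_BM B \<zeta> a t \<in> borel_measurable M"
proof -
  have [measurable]: "\<zeta> (a + ln t) \<in> borel_measurable M"
    using subordinator_measurable[OF sub \<open>0 \<le> a + ln t\<close>] .
  have "(\<lambda>\<omega>. B (exp (\<zeta> (a + ln t) \<omega>)) \<omega>) \<in> borel_measurable M"
    by (rule measurable_at_random_time[OF gaussian_increments_measurable[OF standard_BM_gaussian_increments[OF BM]]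
        standard_BM_continuous[OF BM]]) simp_all
  then show ?thesis
    unfolding time_changed_BM_def by measurable
qed

lemma sqrt_exp: "sqrt (exp x) = exp (x / 2)"
  by (rule real_sqrt_unique) (simp_all add: power2_eq_square flip: exp_add)

lemma time_changed_BM_at_start:
  assumes "0 < t" "\<zeta> 0 \<omega> = 0"
  shows "time_changed_BM B \<zeta> (- ln t) t \<omega> = sqrt t * B 1 \<omega>"
  using assms by (simp add: time_changed_BM_def)

lemma time_changed_BM_deterministic:
  assumes "0 < m" "0 < t" "\<zeta> (- ln m + ln t) \<omega> = - ln m + ln t"
  shows "time_changed_BM B \<zeta> (- ln m) t \<omega> = sqrt m * B (t / m) \<omega>"
proof -
  have "- (- ln m + ln t) = ln (m / t)"
    using assms(1,2) by (simp add: ln_div)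
  then have "sqrt t * exp (- (- ln m + ln t) / 2) = sqrt t * sqrt (m / t)"
    using sqrt_exp[of "ln (m / t)"] assms(1,2) by simp
  also have "\<dots> = sqrt m"
    using assms(2) by (simp add: real_sqrt_mult[symmetric])
  finally have scale: "sqrt t * exp (- (- ln m + ln t) / 2) = sqrt m" .
  have time: "exp (- ln m + ln t) = t / m"
    using assms(1,2) by (simp add: exp_diff)
  have "time_changed_BM B \<zeta> (- ln m) t \<omega>
      = sqrt t * exp (- (- ln m + ln t) / 2) * B (exp (- ln m + ln t)) \<omega>"
    using assms(3) by (simp only: time_changed_BM_def)
  also have "\<dots> = sqrt m * B (t / m) \<omega>"
    by (simp only: scale time)
  finally show ?thesis .
qed

lemma gaussian_increments_distr_scaled:
  assumes U: "gaussian_increments M U" and "0 < t"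
  shows "distr M borel (\<lambda>\<omega>. sqrt t * U 1 \<omega>) = distr M borel (U t)"
proof -
  have "same_fdd_on {0<..} M (\<lambda>r \<omega>. sqrt t * U (r / t) \<omega>) M U"
    by (intro gaussian_increments_same_fdd gaussian_increments_scale U \<open>0 < t\<close>)
  from same_fdd_on_distr[OF this, of t] show ?thesis
    using \<open>0 < t\<close> gaussian_increments_measurable[OF U] by simp
qed

lemma associated_process_distr:
  assumes BM: "standard_BM M B" and sub: "subordinator M \<zeta>"
    and assoc: "associated_process N X M B \<zeta>" and "0 \<le> t"
  shows "distr N borel (X t) = distr M borel (B t)"
proof (cases "t = 0")
  case True
  have "distr N borel (X 0) = distr N borel (\<lambda>_. 0)"
    using associated_process_zero[OF assoc] associated_process_measurable[OF assoc, of 0]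
    by (intro distr_cong_AE) simp_all
  also have "\<dots> = distr M borel (\<lambda>_. 0)"
    by (simp add: prob_space.distr_const[OF associated_process_prob_space[OF assoc]]
        prob_space.distr_const[OF gaussian_increments_prob_space[OF standard_BM_gaussian_increments[OF BM]]])
  also have "\<dots> = distr M borel (B 0)"
    using gaussian_increments_zero[OF standard_BM_gaussian_increments[OF BM]]
      by (intro distr_cong) simp_all
  finally show ?thesis
    using True by simp
next
  case False
  then have "0 < t"
    using \<open>0 \<le> t\<close> by simp
  have "distr N borel (X t) = distr M borel (time_changed_BM B \<zeta> (- ln t) t)"
    using \<open>0 < t\<close>
    by (intro same_fdd_on_distr[OF associated_process_same_fdd[OF assoc]]
      time_changed_BM_measurable[OF BM sub]
        associated_process_measurable[OF assoc]) simp_all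
  also have "\<dots> = distr M borel (\<lambda>\<omega>. sqrt t * B 1 \<omega>)"
    using \<open>0 < t\<close> subordinator_zero[OF sub]
      by (intro distr_cong) (simp_all add: time_changed_BM_at_start)
  also have "\<dots> = distr M borel (B t)"
    using gaussian_increments_distr_scaled[OF standard_BM_gaussian_increments[OF BM] \<open>0 < t\<close>] .
  finally show ?thesis .
qed


section \<open>The martingale property forces \<open>\<zeta>\<^sub>t = t\<close>\<close>

lemma nn_integral_exp_gaussian_increments_mixed:
  assumes U: "gaussian_increments M U" and "0 \<le> z"
  shows "(\<integral>\<^sup>+\<omega>. exp (U 1 \<omega> - 1 / 2) ^ k * exp (exp ((u - z) / 2) * U (exp z) \<omega> - exp u / 2) \<partial>M)
       = exp (real k * (real k - 1) / 2 + real k * exp ((u - z) / 2))"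
proof -
  define \<beta> where "\<beta> = exp ((u - z) / 2)"
  have \<beta>: "\<beta>\<^sup>2 * exp z = exp u"
    by (simp add: \<beta>_def power2_eq_square flip: exp_add)
  have "(\<integral>\<^sup>+\<omega>. exp (U 1 \<omega> - 1 / 2) ^ k * exp (\<beta> * U (exp z) \<omega> - exp u / 2) \<partial>M)
      = (\<integral>\<^sup>+\<omega>. exp (- real k / 2 - exp u / 2) * ennreal (exp (k * U 1 \<omega> + \<beta> * U (exp z) \<omega>)) \<partial>M)"
  proof (intro nn_integral_cong)
    fix \<omega>
    have "exp (U 1 \<omega> - 1 / 2) ^ k * exp (\<beta> * U (exp z) \<omega> - exp u / 2)
        = exp (k * (U 1 \<omega> - 1 / 2) + (\<beta> * U (exp z) \<omega> - exp u / 2))"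
      by (simp add: exp_add exp_of_nat_mult)
    also have "\<dots> = exp ((- real k / 2 - exp u / 2) + (k * U 1 \<omega> + \<beta> * U (exp z) \<omega>))"
      by (simp add: algebra_simps)
    finally show "ennreal (exp (U 1 \<omega> - 1 / 2) ^ k * exp (\<beta> * U (exp z) \<omega> - exp u / 2))
        = exp (- real k / 2 - exp u / 2) * ennreal (exp (k * U 1 \<omega> + \<beta> * U (exp z) \<omega>))"
      by (simp add: exp_add ennreal_mult')
  qed
  also have "\<dots> = ennreal (exp (- real k / 2 - exp u / 2))
      * ennreal (exp ((real k + \<beta>)\<^sup>2 / 2 + \<beta>\<^sup>2 * (exp z - 1) / 2))"
    using nn_integral_exp_gaussian_increments_two_times[OF U, of 1 "exp z" k \<beta>] \<open>0 \<le> z\<close>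
      gaussian_increments_measurable[OF U]
    by (subst nn_integral_cmult) simp_all
  also have "\<dots> = exp (- real k / 2 - exp u / 2 + ((real k + \<beta>)\<^sup>2 / 2 + \<beta>\<^sup>2 * (exp z - 1) / 2))"
    by (simp add: exp_add ennreal_mult')
  also have "- real k / 2 - exp u / 2 + ((real k + \<beta>)\<^sup>2 / 2 + \<beta>\<^sup>2 * (exp z - 1) / 2)
      = real k * (real k - 1) / 2 + real k * \<beta>"
    using \<beta> by (simp add: power2_eq_square algebra_simps add_divide_distrib[symmetric])
  finally show ?thesis
    by (simp add: \<beta>_def)
qed

lemma time_changed_BM_at_exp:
  "time_changed_BM B \<zeta> 0 (exp u) \<omega> = exp ((u - \<zeta> u \<omega>) / 2) * B (exp (\<zeta> u \<omega>)) \<omega>"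
  by (simp add: time_changed_BM_def sqrt_exp diff_divide_distrib flip: exp_add)

lemma time_changed_BM_mixed_exp_moment:
  assumes BM: "standard_BM M B" and sub: "subordinator M \<zeta>" and ind: "indep_processes M B \<zeta>"
    and "0 \<le> u"
  shows "(\<integral>\<^sup>+\<omega>. exp (B 1 \<omega> - 1 / 2) ^ k * exp (time_changed_BM B \<zeta> 0 (exp u) \<omega> - exp u / 2) \<partial>M)
       = exp (real k * (real k - 1) / 2) * (\<integral>\<^sup>+\<omega>. exp (real k * exp ((u - \<zeta> u \<omega>) / 2)) \<partial>M)"
proof -
  have U: "gaussian_increments M B"
    using standard_BM_gaussian_increments[OF BM] .
  interpret prob_space M
    using gaussian_increments_prob_space[OF U] .
  have [measurable]: "\<zeta> u \<in> borel_measurable M"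
    using subordinator_measurable[OF sub \<open>0 \<le> u\<close>] .
  have W_meas: "(\<lambda>\<omega>. ennreal (exp (real k * exp ((u - \<zeta> u \<omega>) / 2)))) \<in> borel_measurable M"
    by measurable
  let ?P = "Pi\<^sub>M {0::real..} (\<lambda>_. borel :: real measure)"
  define F where "F \<omega> \<omega>' = ennreal (exp (B 1 \<omega> - 1 / 2) ^ k
      * exp (exp ((u - \<zeta> u \<omega>') / 2) * B (exp (\<zeta> u \<omega>')) \<omega> - exp u / 2))" for \<omega> \<omega>'
  \<comment> \<open>\<open>F \<omega> \<omega>'\<close> as a measurable function of the paths of \<open>B\<close> at \<open>\<omega>\<close> and of \<open>\<zeta>\<close> at \<open>\<omega>'\<close>\<close>
  define G where "G p = ennreal (exp (fst p 1 - 1 / 2) ^ k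
      * exp (exp ((u - snd p u) / 2) * path_eval (fst p) (exp (snd p u)) - exp u / 2))"
    for p :: "(real \<Rightarrow> real) \<times> (real \<Rightarrow> real)"
  have [measurable]: "(\<lambda>f. f 1) \<in> borel_measurable ?P" "(\<lambda>f. f u) \<in> borel_measurable ?P"
    using \<open>0 \<le> u\<close> by (auto intro: measurable_component_singleton)
  have G_meas: "G \<in> borel_measurable (?P \<Otimes>\<^sub>M ?P)"
    unfolding G_def by measurable
  have G_eval: "G (restrict (\<lambda>t. B t \<omega>) {0..}, restrict (\<lambda>t. \<zeta> t \<omega>') {0..}) = F \<omega> \<omega>'"
    if "\<omega> \<in> space M" for \<omega> \<omega>'
    using \<open>0 \<le> u\<close> by (simp add: G_def F_def path_eval_restrict standard_BM_continuous[OF BM that])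
  have "(\<integral>\<^sup>+\<omega>. F \<omega> \<omega> \<partial>M) = (\<integral>\<^sup>+\<omega>'. (\<integral>\<^sup>+\<omega>. F \<omega> \<omega>' \<partial>M) \<partial>M)"
    using nn_integral_indep_var[OF ind[unfolded indep_processes_def] G_meas] G_eval
    by (simp cong: nn_integral_cong)
  also have "\<dots> = (\<integral>\<^sup>+\<omega>'. exp (real k * (real k - 1) / 2) * ennreal (exp (real k * exp ((u - \<zeta> u \<omega>') /
    2))) \<partial>M)"
  proof (rule nn_integral_cong)
    fix \<omega>' assume "\<omega>' \<in> space M"
    then have "(\<integral>\<^sup>+\<omega>. F \<omega> \<omega>' \<partial>M) = exp (real k * (real k - 1) / 2 + real k * exp ((u - \<zeta> u \<omega>') / 2))"
      unfolding F_def by (intro nn_integral_exp_gaussian_increments_mixed U subordinator_nonneg[OF sub \<open>0 \<le> u\<close>])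
    then show "(\<integral>\<^sup>+\<omega>. F \<omega> \<omega>' \<partial>M)
        = exp (real k * (real k - 1) / 2) * ennreal (exp (real k * exp ((u - \<zeta> u \<omega>') / 2)))"
      by (simp add: exp_add ennreal_mult')
  qed
  also have "\<dots> = exp (real k * (real k - 1) / 2) * (\<integral>\<^sup>+\<omega>. exp (real k * exp ((u - \<zeta> u \<omega>) / 2)) \<partial>M)"
    by (rule nn_integral_cmult[OF W_meas])
  finally show ?thesis
    by (simp add: F_def time_changed_BM_at_exp)
qed

lemma associated_process_mixed_exp_moment:
  assumes BM: "standard_BM M B" and sub: "subordinator M \<zeta>" and ind: "indep_processes M B \<zeta>"
    and assoc: "associated_process N X M B \<zeta>" and "0 \<le> u"
  shows "(\<integral>\<^sup>+\<omega>. ennreal (exp (X 1 \<omega> - 1 / 2) ^ k) * ennreal (exp (X (exp u) \<omega> - exp u / 2)) \<partial>N)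
       = exp (real k * (real k - 1) / 2) * (\<integral>\<^sup>+\<omega>. exp (real k * exp ((u - \<zeta> u \<omega>) / 2)) \<partial>M)"
proof -
  define Y where "Y = time_changed_BM B \<zeta> 0"
  define g where "g p = ennreal (exp (fst p - 1 / 2) ^ k) * ennreal (exp (snd p - exp u / 2))" for p
  have g: "g \<in> borel_measurable borel"
    unfolding g_def borel_prod[symmetric] by measurable
  have fdd: "same_fdd_on {1..} N X M Y"
    using associated_process_same_fdd[OF assoc, of 0] by (simp add: Y_def)
  have "(\<integral>\<^sup>+\<omega>. g (X 1 \<omega>, X (exp u) \<omega>) \<partial>N) = (\<integral>\<^sup>+\<omega>. g (Y 1 \<omega>, Y (exp u) \<omega>) \<partial>M)"
    using \<open>0 \<le> u\<close> unfolding Y_def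
    by (intro same_fdd_on_nn_integral_pair[OF fdd[unfolded Y_def] _ _ _ _ _ _ g]
      associated_process_measurable[OF assoc]
        time_changed_BM_measurable[OF BM sub]) simp_all
  also have "\<dots> = (\<integral>\<^sup>+\<omega>. exp (B 1 \<omega> - 1 / 2) ^ k * exp (Y (exp u) \<omega> - exp u / 2) \<partial>M)"
    using time_changed_BM_at_start[of 1 \<zeta> _ B] subordinator_zero[OF sub]
    by (intro nn_integral_cong) (simp add: g_def Y_def ennreal_mult')
  finally show ?thesis
    unfolding g_def Y_def using time_changed_BM_mixed_exp_moment[OF BM sub ind \<open>0 \<le> u\<close>] by simp
qed

lemma nn_integral_exp_gaussian_increments_power:
  assumes U: "gaussian_increments M U"
  shows "(\<integral>\<^sup>+\<omega>. exp (U 1 \<omega> - 1 / 2) ^ Suc k \<partial>M) = exp (real k * (real k + 1) / 2)"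
proof -
  have "(\<integral>\<^sup>+\<omega>. exp (U 1 \<omega> - 1 / 2) ^ Suc k \<partial>M)
      = (\<integral>\<^sup>+\<omega>. exp (- (real k + 1) / 2) * ennreal (exp ((real k + 1) * U 1 \<omega>)) \<partial>M)"
  proof (rule nn_integral_cong)
    fix \<omega>
    have "exp (U 1 \<omega> - 1 / 2) ^ Suc k = exp (real (Suc k) * (U 1 \<omega> - 1 / 2))"
      by (rule exp_of_nat_mult[symmetric])
    also have "real (Suc k) * (U 1 \<omega> - 1 / 2) = - (real k + 1) / 2 + (real k + 1) * U 1 \<omega>"
      by (simp add: field_simps)
    finally show "ennreal (exp (U 1 \<omega> - 1 / 2) ^ Suc k)
        = exp (- (real k + 1) / 2) * ennreal (exp ((real k + 1) * U 1 \<omega>))"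
      by (simp add: ennreal_mult' exp_add)
  qed
  also have "\<dots> = exp (- (real k + 1) / 2) * exp ((real k + 1)\<^sup>2 * 1 / 2)"
    using gaussian_increments_measurable[OF U, of 1]
    by (subst nn_integral_cmult) (simp_all add: nn_integral_exp_gaussian_increments_at[OF U]
      ennreal_mult')
  also have "- (real k + 1) / 2 + (real k + 1)\<^sup>2 * 1 / 2 = real k * (real k + 1) / 2"
    by (simp add: power2_eq_square field_simps)
  then have "exp (- (real k + 1) / 2) * exp ((real k + 1)\<^sup>2 * 1 / 2) = exp (real k * (real k + 1) / 2)"
    by (simp only: flip: exp_add)
  finally show ?thesis .
qed

lemma associated_martingale_exp_moment:
  assumes BM: "standard_BM M B" and sub: "subordinator M \<zeta>" and ind: "indep_processes M B \<zeta>"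
    and assoc: "associated_process N X M B \<zeta>"
    and mart: "martingale N (\<lambda>t \<omega>. exp (X t \<omega> - t / 2))" and "0 \<le> u"
  shows "(\<integral>\<^sup>+\<omega>. exp (real k * exp ((u - \<zeta> u \<omega>) / 2)) \<partial>M) = exp (real k)"
proof -
  have "(\<integral>\<^sup>+\<omega>. ennreal (exp (X 1 \<omega> - 1 / 2) ^ k) * ennreal (exp (X (exp u) \<omega> - exp u / 2)) \<partial>N)
      = (\<integral>\<^sup>+\<omega>. exp (X 1 \<omega> - 1 / 2) ^ Suc k \<partial>N)"
    using martingale_nn_integral_mult[OF mart, of 1 "exp u" "\<lambda>y. ennreal (y ^ k)"] \<open>0 \<le> u\<close>
    by (simp add: ennreal_mult' mult.commute)
  also have "\<dots> = (\<integral>\<^sup>+\<omega>. exp (B 1 \<omega> - 1 / 2) ^ Suc k \<partial>M)"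
    by (rule nn_integral_eq_of_distr_eq[OF associated_process_distr[OF BM sub assoc]
          associated_process_measurable[OF assoc] gaussian_increments_measurable[OF standard_BM_gaussian_increments[OF BM]]])
      simp_all
  also have "\<dots> = exp (real k * (real k + 1) / 2)"
    by (rule nn_integral_exp_gaussian_increments_power[OF standard_BM_gaussian_increments[OF BM]])
  also have "real k * (real k + 1) / 2 = real k * (real k - 1) / 2 + real k"
    by (simp add: field_simps)
  finally show ?thesis
    using associated_process_mixed_exp_moment[OF BM sub ind assoc \<open>0 \<le> u\<close>, of k]
    by (simp add: exp_add ennreal_mult' ennreal_mult_cancel_left)
qed

lemma martingale_imp_deterministic_subordinator:
  assumes BM: "standard_BM M B" and sub: "subordinator M \<zeta>" and "indep_processes M B \<zeta>"
    and "associated_process N X M B \<zeta>"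
    and "martingale N (\<lambda>t \<omega>. exp (X t \<omega> - t / 2))"
  shows "\<forall>t\<ge>0. AE \<omega> in M. \<zeta> t \<omega> = t"
proof (intro allI impI)
  fix u :: real assume "0 \<le> u"
  interpret prob_space M
    using gaussian_increments_prob_space[OF standard_BM_gaussian_increments[OF BM]] .
  define V where "V \<omega> = exp (exp ((u - \<zeta> u \<omega>) / 2))" for \<omega>
  have [measurable]: "\<zeta> u \<in> borel_measurable M"
    using subordinator_measurable[OF sub \<open>0 \<le> u\<close>] .
  have "(\<integral>\<^sup>+\<omega>. V \<omega> \<partial>M) = exp 1"
    using associated_martingale_exp_moment[OF assms \<open>0 \<le> u\<close>, of 1] by (simp add: V_def)
  moreover have "(\<integral>\<^sup>+\<omega>. ennreal ((V \<omega>)\<^sup>2) \<partial>M) = ennreal ((exp 1)\<^sup>2)"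
    using associated_martingale_exp_moment[OF assms \<open>0 \<le> u\<close>, of 2]
    by (simp add: V_def flip: exp_double)
  ultimately have "AE \<omega> in M. V \<omega> = exp 1"
    by (intro AE_eq_of_nn_integral_square) (simp_all add: V_def)
  then show "AE \<omega> in M. \<zeta> u \<omega> = u"
    by eventually_elim (simp add: V_def)
qed


section \<open>Deterministic time change\<close>

lemma distr_restrict_drop_zero:
  fixes Z :: "real \<Rightarrow> 'a \<Rightarrow> real"
  assumes Z: "\<And>t. t \<in> I \<Longrightarrow> Z t \<in> borel_measurable K" and Z0: "AE \<omega> in K. Z 0 \<omega> = 0"
  shows "distr K (Pi\<^sub>M I (\<lambda>_. borel)) (\<lambda>\<omega>. restrict (\<lambda>t. Z t \<omega>) I)
       = distr (distr K (Pi\<^sub>M (I - {0}) (\<lambda>_. borel)) (\<lambda>\<omega>. restrict (\<lambda>t. Z t \<omega>) (I - {0})))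
           (Pi\<^sub>M I (\<lambda>_. borel)) (\<lambda>f. restrict (\<lambda>t. if t = 0 then 0 else f t) I)"
proof -
  let ?ext = "\<lambda>f. restrict (\<lambda>t. if t = 0 then 0 else f t) I"
  have ext: "?ext \<in> measurable (Pi\<^sub>M (I - {0}) (\<lambda>_. borel)) (Pi\<^sub>M I (\<lambda>_. borel :: real measure))"
  proof (rule measurable_restrict)
    fix t assume "t \<in> I"
    then show "(\<lambda>f. if t = 0 then 0 else f t) \<in> borel_measurable (Pi\<^sub>M (I - {0}) (\<lambda>_. borel))"
      by (cases "t = 0") (auto intro: measurable_component_singleton)
  qed
  have ZJ: "(\<lambda>\<omega>. restrict (\<lambda>t. Z t \<omega>) (I - {0})) \<in> measurable K (Pi\<^sub>M (I - {0}) (\<lambda>_. borel))"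
    using Z by (intro measurable_restrict) auto
  have "distr K (Pi\<^sub>M I (\<lambda>_. borel)) (\<lambda>\<omega>. restrict (\<lambda>t. Z t \<omega>) I)
      = distr K (Pi\<^sub>M I (\<lambda>_. borel)) (?ext \<circ> (\<lambda>\<omega>. restrict (\<lambda>t. Z t \<omega>) (I - {0})))"
  proof (rule distr_cong_AE)
    show "AE \<omega> in K. restrict (\<lambda>t. Z t \<omega>) I = (?ext \<circ> (\<lambda>\<omega>. restrict (\<lambda>t. Z t \<omega>) (I - {0}))) \<omega>"
      using Z0 by eventually_elim (auto simp: fun_eq_iff)
  qed (use Z in \<open>auto intro!: measurable_restrict measurable_comp[OF ZJ ext]\<close>)
  also have "\<dots> = distr (distr K (Pi\<^sub>M (I - {0}) (\<lambda>_. borel)) (\<lambda>\<omega>. restrict (\<lambda>t. Z t \<omega>) (I - {0})))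
      (Pi\<^sub>M I (\<lambda>_. borel)) ?ext"
    by (rule distr_distr[OF ext ZJ, symmetric])
  finally show ?thesis .
qed

lemma same_fdd_on_insert_zero:
  assumes fdd: "same_fdd_on {0<..} N X M Y"
    and X: "\<And>t. 0 \<le> t \<Longrightarrow> X t \<in> borel_measurable N" "AE \<omega> in N. X 0 \<omega> = 0"
    and Y: "\<And>t. 0 \<le> t \<Longrightarrow> Y t \<in> borel_measurable M" "AE \<omega> in M. Y 0 \<omega> = 0"
  shows "same_fdd_on {0..} N X M Y"
  unfolding same_fdd_on_def
proof (intro allI impI)
  fix I :: "real set" assume I: "finite I \<and> I \<subseteq> {0..}"
  then have "distr N (Pi\<^sub>M (I - {0}) (\<lambda>_. borel)) (\<lambda>\<omega>. restrict (\<lambda>t. X t \<omega>) (I - {0}))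
      = distr M (Pi\<^sub>M (I - {0}) (\<lambda>_. borel)) (\<lambda>\<omega>. restrict (\<lambda>t. Y t \<omega>) (I - {0}))"
    by (intro same_fdd_onD[OF fdd]) auto
  moreover have "\<And>t. t \<in> I \<Longrightarrow> X t \<in> borel_measurable N" "\<And>t. t \<in> I \<Longrightarrow> Y t \<in> borel_measurable M"
    using I X(1) Y(1) by auto
  ultimately show "distr N (Pi\<^sub>M I (\<lambda>_. borel)) (\<lambda>\<omega>. restrict (\<lambda>t. X t \<omega>) I)
      = distr M (Pi\<^sub>M I (\<lambda>_. borel)) (\<lambda>\<omega>. restrict (\<lambda>t. Y t \<omega>) I)"
    using distr_restrict_drop_zero[of I X N] distr_restrict_drop_zero[of I Y M] X(2) Y(2) by simp
qed

lemma deterministic_time_changed_BM_distr: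
  assumes BM: "standard_BM M B" and sub: "subordinator M \<zeta>" and det: "\<forall>t\<ge>0. AE \<omega> in M. \<zeta> t \<omega> = t"
    and J: "finite J" "0 < m" "\<And>t. t \<in> J \<Longrightarrow> m \<le> t"
  shows "distr M (Pi\<^sub>M J (\<lambda>_. borel)) (\<lambda>\<omega>. restrict (\<lambda>t. time_changed_BM B \<zeta> (- ln m) t \<omega>) J)
       = distr M (Pi\<^sub>M J (\<lambda>_. borel)) (\<lambda>\<omega>. restrict (\<lambda>t. B t \<omega>) J)"
proof -
  have U: "gaussian_increments M B"
    using standard_BM_gaussian_increments[OF BM] .
  have J_pos: "0 < t" if "t \<in> J" for t
    using J(2) J(3)[OF that] by linarith
  have times: "0 \<le> - ln m + ln t" "0 \<le> t / m" if "t \<in> J" for t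
    using J(2) J(3)[OF that] J_pos[OF that] by simp_all
  have "distr M (Pi\<^sub>M J (\<lambda>_. borel)) (\<lambda>\<omega>. restrict (\<lambda>t. time_changed_BM B \<zeta> (- ln m) t \<omega>) J)
      = distr M (Pi\<^sub>M J (\<lambda>_. borel)) (\<lambda>\<omega>. restrict (\<lambda>t. sqrt m * B (t / m) \<omega>) J)"
  proof (rule distr_cong_AE)
    have "AE \<omega> in M. \<forall>t\<in>J. \<zeta> (- ln m + ln t) \<omega> = - ln m + ln t"
      using J(1) times(1) det by (intro AE_finite_allI) auto
    then show "AE \<omega> in M. restrict (\<lambda>t. time_changed_BM B \<zeta> (- ln m) t \<omega>) J
        = restrict (\<lambda>t. sqrt m * B (t / m) \<omega>) J"
    proof eventually_elim
      case (elim \<omega>)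
      show ?case
      proof (rule restrict_ext)
        fix t assume "t \<in> J"
        with elim have "\<zeta> (- ln m + ln t) \<omega> = - ln m + ln t"
          by blast
        then show "time_changed_BM B \<zeta> (- ln m) t \<omega> = sqrt m * B (t / m) \<omega>"
          by (rule time_changed_BM_deterministic[OF J(2) J_pos[OF \<open>t \<in> J\<close>]])
      qed
    qed
    show "(\<lambda>\<omega>. restrict (\<lambda>t. time_changed_BM B \<zeta> (- ln m) t \<omega>) J) \<in> measurable M (Pi\<^sub>M J (\<lambda>_. borel))"
      using times(1) by (intro measurable_restrict time_changed_BM_measurable[OF BM sub])
    show "(\<lambda>\<omega>. restrict (\<lambda>t. sqrt m * B (t / m) \<omega>) J) \<in> measurable M (Pi\<^sub>M J (\<lambda>_. borel))"
      using times(2)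
      by (intro measurable_restrict borel_measurable_times measurable_const
        gaussian_increments_measurable[OF U])
        simp_all
  qed simp_all
  also have "\<dots> = distr M (Pi\<^sub>M J (\<lambda>_. borel)) (\<lambda>\<omega>. restrict (\<lambda>t. B t \<omega>) J)"
    using J J_pos by (intro same_fdd_onD[OF gaussian_increments_same_fdd] gaussian_increments_scale
      U) auto
  finally show ?thesis .
qed

lemma deterministic_subordinator_same_fdd_pos:
  assumes BM: "standard_BM M B" and sub: "subordinator M \<zeta>"
    and assoc: "associated_process N X M B \<zeta>" and det: "\<forall>t\<ge>0. AE \<omega> in M. \<zeta> t \<omega> = t"
  shows "same_fdd_on {0<..} N X M B"
  unfolding same_fdd_on_def
proof (intro allI impI)
  fix J :: "real set" assume J: "finite J \<and> J \<subseteq> {0<..}"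
  show "distr N (Pi\<^sub>M J (\<lambda>_. borel)) (\<lambda>\<omega>. restrict (\<lambda>t. X t \<omega>) J)
      = distr M (Pi\<^sub>M J (\<lambda>_. borel)) (\<lambda>\<omega>. restrict (\<lambda>t. B t \<omega>) J)"
  proof (cases "J = {}")
    case True
    then show ?thesis
      using associated_process_prob_space[OF assoc]
        gaussian_increments_prob_space[OF standard_BM_gaussian_increments[OF BM]]
      by (simp add: distr_restrict_empty)
  next
    case False
    define m where "m = Min J"
    have m: "0 < m" "\<And>t. t \<in> J \<Longrightarrow> m \<le> t"
      using J False Min_in[of J] unfolding m_def by auto
    have "distr N (Pi\<^sub>M J (\<lambda>_. borel)) (\<lambda>\<omega>. restrict (\<lambda>t. X t \<omega>) J)
        = distr M (Pi\<^sub>M J (\<lambda>_. borel)) (\<lambda>\<omega>. restrict (\<lambda>t. time_changed_BM B \<zeta> (- ln m) t \<omega>) J)"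
      using J m by (intro same_fdd_onD[OF associated_process_same_fdd[OF assoc]]) auto
    also have "\<dots> = distr M (Pi\<^sub>M J (\<lambda>_. borel)) (\<lambda>\<omega>. restrict (\<lambda>t. B t \<omega>) J)"
      using J m by (intro deterministic_time_changed_BM_distr[OF BM sub det]) auto
    finally show ?thesis .
  qed
qed

lemma deterministic_subordinator_same_fdd:
  assumes BM: "standard_BM M B" and "subordinator M \<zeta>"
    and assoc: "associated_process N X M B \<zeta>" and "\<forall>t\<ge>0. AE \<omega> in M. \<zeta> t \<omega> = t"
  shows "same_fdd_on {0..} N X M B"
  using deterministic_subordinator_same_fdd_pos[OF assms] associated_process_measurable[OF assoc]
    associated_process_zero[OF assoc] gaussian_increments_measurable[OF standard_BM_gaussian_increments[OF BM]]
    gaussian_increments_zero[OF standard_BM_gaussian_increments[OF BM]]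
  by (intro same_fdd_on_insert_zero) (auto intro: AE_I2)

theorem corollary4p9:
  fixes M :: "'a measure" and N :: "'b measure"
    and B \<zeta> :: "real \<Rightarrow> 'a \<Rightarrow> real" and X :: "real \<Rightarrow> 'b \<Rightarrow> real"
  assumes "standard_BM M B"
    and "subordinator M \<zeta>"
    and "indep_processes M B \<zeta>"
    and "associated_process N X M B \<zeta>"
  shows "(\<forall>t\<ge>0. distr N borel (\<lambda>\<omega>. exp (X t \<omega> - t / 2))
                 = distr M borel (\<lambda>\<omega>. exp (B t \<omega> - t / 2)))
         \<and> (martingale N (\<lambda>t \<omega>. exp (X t \<omega> - t / 2)) \<longrightarrow> (\<forall>t\<ge>0. AE \<omega> in M. \<zeta> t \<omega> = t))
         \<and> ((\<forall>t\<ge>0. AE \<omega> in M. \<zeta> t \<omega> = t) \<longrightarrow> same_fdd_on {0..} N X M B)"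
proof -
  have "distr N borel (\<lambda>\<omega>. exp (X t \<omega> - t / 2)) = distr M borel (\<lambda>\<omega>. exp (B t \<omega> - t / 2))"
    if "0 \<le> t" for t
    by (rule distr_eq_of_distr_eq[where h="\<lambda>x. exp (x - t / 2)",
          OF associated_process_distr[OF assms(1,2,4) that] associated_process_measurable[OF assms(4) that]
          gaussian_increments_measurable[OF standard_BM_gaussian_increments[OF assms(1)] that]])
      simp
  then show ?thesis
    using martingale_imp_deterministic_subordinator[OF assms] deterministic_subordinator_same_fdd[OF assms(1,2,4)]
    by blast
qed

end
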